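(* Let $\gamma$ be a generator of $\mathbb{F}_q^*$, let $f_1,\dots,f_s\in\mathbb{F}_q[x]$ be polynomials of degree at most $d$, and let $M$ be the $s\times s$ matrix over $\mathbb{F}_q(x)$ with $(j,i)$ entry $f_i(\gamma^j x)$ for $j=0,\dots,s-1$, $i=1,\dots,s$. Then: (1) $\det(M)\ne0$ iff $f_1,\dots,f_s$ are linearly independent over the subfield $\mathbb{F}_q(x^{q-1})$ of $\mathbb{F}_q(x)$; (2) if $q-1>d$, then $\det(M)\neq0$ iff $f_1,\dots,f_s$ are linearly independent over $\mathbb{F}_q$.
   Context: $\mathbb{F}_q(x^{q-1})$ denotes the subfield of $\mathbb{F}_q(x)$ consisting of rational functions of the form $u(x^{q-1})$ with $u\in\mathbb{F}_q(x)$. *)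

theory Defs
  imports "Jordan_Normal_Form.Determinant" "HOL-Computational_Algebra.Fraction_Field"
begin

text \<open>The subfield
  F_q(x^{q-1}) consists of all u(x^{q-1}) with u a rational function, i.e. all
  quotients a(x^{q-1}) / b(x^{q-1}) of polynomials.\<close>

definition subfield_xq1 :: "('a::{finite,field}) poly fract set" where
  "subfield_xq1 = {u. \<exists>a b. u = to_fract (pcompose a (monom 1 (card (UNIV :: 'a set) - 1))) /
                    to_fract (pcompose b (monom 1 (card (UNIV :: 'a set) - 1)))}"

definition lin_indep_over :: "'b::field set \<Rightarrow> nat \<Rightarrow> (nat \<Rightarrow> 'b) \<Rightarrow> bool" where
  "lin_indep_over K s g \<longleftrightarrow>
     (\<forall>c. (\<forall>i<s. c i \<in> K) \<longrightarrow> (\<Sum>i<s. c i * g i) = 0 \<longrightarrow> (\<forall>i<s. c i = 0))"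

definition lin_indep_Fq :: "nat \<Rightarrow> (nat \<Rightarrow> 'a::field poly) \<Rightarrow> bool" where
  "lin_indep_Fq s f \<longleftrightarrow>
     (\<forall>c::nat \<Rightarrow> 'a. (\<Sum>i<s. smult (c i) (f i)) = 0 \<longrightarrow> (\<forall>i<s. c i = 0))"

definition Mmat :: "'a::field \<Rightarrow> nat \<Rightarrow> (nat \<Rightarrow> 'a poly) \<Rightarrow> 'a poly fract mat" where
  "Mmat \<gamma> s f = mat s s (\<lambda>(j, i). to_fract (pcompose (f i) [:0, \<gamma> ^ j:]))"

end

(* Let sigma be the ring automorphism p(x) |-> p(gamma x) of F_q[x].  It has order q - 1 and
   its fixed ring is F_q[x^(q-1)]; row j of M is sigma^j applied to (f_1, ..., f_s).
   A relation sum u_i f_i = 0 with sigma-fixed coefficients u_i is therefore a kernel vector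
   of M.  Conversely, Artin's elimination turns a kernel vector of M into a relation whose
   coefficients have pairwise sigma-fixed ratios, and multiplying it by the partial norm
   prod_(0<j<q-1) sigma^j(w_k) makes all coefficients sigma-fixed.  Relations with
   coefficients in F_q[x^(q-1)] are relations over F_q(x^(q-1)) with the denominators
   cleared.  If deg f_i < q - 1, the coefficient of x^((q-1)m + r) in sum a_i(x^(q-1)) f_i
   is sum_i coeff(a_i, m) coeff(f_i, r), so such a relation splits into relations over F_q. *)

theory Submission
  imports Defs
begin

section \<open>Dilations of polynomials\<close>

definition dilate :: "'a::comm_semiring_1 \<Rightarrow> 'a poly \<Rightarrow> 'a poly" where
  "dilate c p = p \<circ>\<^sub>p [:0, c:]"

lemma coeff_dilate: "coeff (dilate c p) k = c ^ k * coeff p k"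
  by (simp add: dilate_def coeff_pcompose_linear)

lemma dilate_0 [simp]: "dilate c 0 = 0"
  by (simp add: dilate_def)

lemma dilate_1 [simp]: "dilate 1 p = p"
  by (rule poly_eqI) (simp add: coeff_dilate)

lemma dilate_mult [simp]: "dilate c (p * q) = dilate c p * dilate c q"
  by (simp add: dilate_def pcompose_mult)

lemma dilate_sum: "dilate c (\<Sum>i\<in>A. f i) = (\<Sum>i\<in>A. dilate c (f i))"
  by (simp add: dilate_def pcompose_sum)

lemma dilate_prod: "dilate c (\<Prod>i\<in>A. f i) = (\<Prod>i\<in>A. dilate c (f i))"
  by (simp add: dilate_def pcompose_prod)

lemma dilate_dilate: "dilate a (dilate b p) = dilate (a * b) p"
  by (rule poly_eqI) (simp add: coeff_dilate power_mult_distrib mult.assoc)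

lemma dilate_eq_0_iff [simp]: "c \<noteq> 0 \<Longrightarrow> dilate c p = 0 \<longleftrightarrow> p = 0"
  for c :: "'a::idom"
  by (auto simp: poly_eq_iff coeff_dilate)

lemma dilate_eq_self_iff:
  fixes c :: "'a::idom"
  shows "dilate c p = p \<longleftrightarrow> (\<forall>k. coeff p k \<noteq> 0 \<longrightarrow> c ^ k = 1)"
proof -
  have "c ^ k * a = a \<longleftrightarrow> a = 0 \<or> c ^ k = 1" for k and a :: 'a
    by (metis mult_cancel_right2)
  then show ?thesis by (auto simp: poly_eq_iff coeff_dilate)
qed

lemma dilate_power_fixed:
  assumes "dilate c p = p"
  shows "dilate (c ^ j) p = p"
proof (induction j)
  case (Suc j)
  then show ?case using assms by (metis dilate_dilate power_Suc)
qed simp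

section \<open>Polynomials in \<open>x\<^sup>n\<close>\<close>

lemma coeff_pcompose_monom_mult:
  fixes a g :: "'a::comm_semiring_1 poly"
  assumes "degree g < n" "r < n"
  shows "coeff ((a \<circ>\<^sub>p monom 1 n) * g) (n * m + r) = coeff a m * coeff g r"
proof (induction a arbitrary: m)
  case (pCons c a)
  have expand: "(pCons c a \<circ>\<^sub>p monom 1 n) * g = smult c g + monom 1 n * ((a \<circ>\<^sub>p monom 1 n) * g)"
    by (simp add: pcompose_pCons algebra_simps)
  show ?case
  proof (cases m)
    case 0
    then show ?thesis using assms(2) by (simp add: expand coeff_monom_mult)
  next
    case (Suc m')
    have "degree g < n * m + r" using assms(1) Suc by (simp add: less_le_trans)
    then have "coeff g (n * m + r) = 0" by (rule coeff_eq_0)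
    moreover have "n * m + r - n = n * m' + r" using Suc by simp
    ultimately show ?thesis using Suc pCons.IH by (simp add: expand coeff_monom_mult)
  qed
qed simp

lemma coeff_pcompose_monom:
  fixes a :: "'a::comm_semiring_1 poly"
  assumes "r < n"
  shows "coeff (a \<circ>\<^sub>p monom 1 n) (n * m + r) = (if r = 0 then coeff a m else 0)"
  using coeff_pcompose_monom_mult[of 1 n r a m] assms by simp

lemma pcompose_monom_if_coeffs_dvd:
  fixes p :: "'a::comm_semiring_1 poly"
  assumes "0 < n" "\<forall>k. coeff p k \<noteq> 0 \<longrightarrow> n dvd k"
  obtains a where "p = a \<circ>\<^sub>p monom 1 n"
proof
  define a where "a = (\<Sum>i\<le>degree p. monom (coeff p (n * i)) i)"
  have coeff_a: "coeff a i = coeff p (n * i)" for i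
  proof (cases "i \<le> degree p")
    case False
    moreover have "i \<le> n * i" using assms(1) by simp
    ultimately have "degree p < n * i" by linarith
    then show ?thesis using False by (simp add: a_def coeff_sum coeff_eq_0)
  qed (simp add: a_def coeff_sum_monom)
  show "p = a \<circ>\<^sub>p monom 1 n"
  proof (rule poly_eqI)
    fix k
    have "coeff (a \<circ>\<^sub>p monom 1 n) (n * (k div n) + k mod n) =
        (if k mod n = 0 then coeff a (k div n) else 0)"
      using assms(1) by (intro coeff_pcompose_monom) simp
    then show "coeff p k = coeff (a \<circ>\<^sub>p monom 1 n) k"
      using assms(2) by (auto simp: coeff_a dvd_eq_mod_eq_0)
  qed
qed

lemma dilate_pcompose_monom:
  fixes c :: "'a::comm_semiring_1"
  assumes "c ^ n = 1"
  shows "dilate c (a \<circ>\<^sub>p monom 1 n) = a \<circ>\<^sub>p monom 1 n"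
proof -
  have "monom 1 n \<circ>\<^sub>p [:0, c:] = monom (1::'a) n"
    using assms by (auto simp: poly_eq_iff coeff_pcompose_linear)
  then show ?thesis by (simp add: dilate_def pcompose_assoc[symmetric])
qed

lemma pcompose_monom_eq_0_iff:
  fixes p :: "'a::{comm_semiring_1,semiring_no_zero_divisors} poly"
  assumes "0 < n"
  shows "p \<circ>\<^sub>p monom 1 n = 0 \<longleftrightarrow> p = 0"
  using assms by (simp add: pcompose_eq_0_iff degree_monom_eq)

definition dependent_over_x_pow :: "nat \<Rightarrow> nat \<Rightarrow> (nat \<Rightarrow> 'a::comm_semiring_1 poly) \<Rightarrow> bool" where
  "dependent_over_x_pow n s f \<longleftrightarrow>
     (\<exists>a. (\<exists>i<s. a i \<noteq> 0) \<and> (\<Sum>i<s. (a i \<circ>\<^sub>p monom 1 n) * f i) = 0)"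

lemma dependent_over_x_pow_iff_not_lin_indep_Fq:
  fixes f :: "nat \<Rightarrow> 'a::field poly"
  assumes deg: "\<forall>i<s. degree (f i) < n"
  shows "dependent_over_x_pow n s f \<longleftrightarrow> \<not> lin_indep_Fq s f"
proof
  assume "dependent_over_x_pow n s f"
  then obtain a i0 where i0: "i0 < s" "a i0 \<noteq> 0" and rel: "(\<Sum>i<s. (a i \<circ>\<^sub>p monom 1 n) * f i) = 0"
    unfolding dependent_over_x_pow_def by blast
  have "(\<Sum>i<s. smult (coeff (a i) m) (f i)) = 0" for m
  proof (rule poly_eqI)
    fix r
    show "coeff (\<Sum>i<s. smult (coeff (a i) m) (f i)) r = coeff 0 r"
    proof (cases "r < n")
      case True
      have "coeff (\<Sum>i<s. smult (coeff (a i) m) (f i)) r =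
          coeff (\<Sum>i<s. (a i \<circ>\<^sub>p monom 1 n) * f i) (n * m + r)"
        using deg True by (simp add: coeff_sum coeff_pcompose_monom_mult)
      then show ?thesis using rel by simp
    next
      case False
      then have "coeff (f i) r = 0" if "i < s" for i
        using deg that by (intro coeff_eq_0) (meson less_le_trans not_less)
      then show ?thesis by (simp add: coeff_sum)
    qed
  qed
  moreover have "coeff (a i0) (degree (a i0)) \<noteq> 0" using i0(2) by simp
  ultimately show "\<not> lin_indep_Fq s f"
    using i0(1) unfolding lin_indep_Fq_def
    by (intro notI) (drule spec[of _ "\<lambda>i. coeff (a i) (degree (a i0))"], blast)
next
  assume "\<not> lin_indep_Fq s f"
  then obtain c i0 where "i0 < s" "c i0 \<noteq> 0" "(\<Sum>i<s. smult (c i) (f i)) = 0"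
    unfolding lin_indep_Fq_def by blast
  then show "dependent_over_x_pow n s f"
    unfolding dependent_over_x_pow_def by (intro exI[of _ "\<lambda>i. [:c i:]"]) auto
qed

section \<open>The determinant of a family and its dilations\<close>

lemma dilate_power_proportional:
  fixes c :: "'a::idom"
  assumes "c \<noteq> 0" "w \<noteq> 0" and proportional: "w * dilate c v = dilate c w * v"
  shows "w * dilate (c ^ j) v = dilate (c ^ j) w * v"
proof (induction j)
  case (Suc j)
  have "dilate c w * dilate (c ^ Suc j) v = dilate c (w * dilate (c ^ j) v)"
    by (simp add: dilate_dilate)
  also have "\<dots> = dilate (c ^ Suc j) w * dilate c v"
    by (simp only: Suc.IH dilate_mult dilate_dilate power_Suc)
  finally have "dilate c w * (w * dilate (c ^ Suc j) v) = dilate c w * (dilate (c ^ Suc j) w * v)"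
    by (metis proportional mult.left_commute)
  then show ?case using assms(1,2) by simp
qed simp

lemma exists_proportional_relation:
  fixes c :: "'a::idom" and f v :: "nat \<Rightarrow> 'a poly"
  assumes "k < s" "v k \<noteq> 0" "card {i. i < s \<and> v i \<noteq> 0} \<le> m"
    and "\<forall>j\<in>{a..<a + m}. (\<Sum>i<s. v i * dilate (c ^ j) (f i)) = 0"
  shows "\<exists>w k b. k < s \<and> w k \<noteq> 0 \<and> (\<forall>i<s. w k * dilate c (w i) = dilate c (w k) * w i) \<and>
    (\<Sum>i<s. w i * dilate (c ^ b) (f i)) = 0"
  using assms
proof (induction "card {i. i < s \<and> v i \<noteq> 0}" arbitrary: v k a m rule: less_induct)
  case less
  \<comment> \<open>Artin's elimination: \<open>u\<close> vanishes at \<open>k\<close>, and the row relations of \<open>v\<close>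
    at \<open>j - 1\<close> and \<open>j\<close> give one of \<open>u\<close> at \<open>j\<close>.\<close>
  define u where "u i = v k * dilate c (v i) - dilate c (v k) * v i" for i
  have card_pos: "0 < card {i. i < s \<and> v i \<noteq> 0}"
    using less.prems(1,2) by (auto simp: card_gt_0_iff)
  show ?case
  proof (cases "\<exists>i<s. u i \<noteq> 0")
    case False
    have "a \<in> {a..<a + m}" using card_pos less.prems(3) by simp
    moreover have "\<forall>i<s. v k * dilate c (v i) = dilate c (v k) * v i"
      using False by (simp add: u_def)
    ultimately show ?thesis using less.prems(1,2,4) by blast
  next
    case True
    then obtain k' where k': "k' < s" "u k' \<noteq> 0" by blast
    have "{i. i < s \<and> u i \<noteq> 0} \<subseteq> {i. i < s \<and> v i \<noteq> 0} - {k}"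
      by (auto simp: u_def)
    then have "card {i. i < s \<and> u i \<noteq> 0} \<le> card ({i. i < s \<and> v i \<noteq> 0} - {k})"
      by (intro card_mono) auto
    also have "\<dots> = card {i. i < s \<and> v i \<noteq> 0} - 1"
      using less.prems(1,2) by (simp add: card_Diff_singleton)
    finally have card_u: "card {i. i < s \<and> u i \<noteq> 0} < card {i. i < s \<and> v i \<noteq> 0}"
      "card {i. i < s \<and> u i \<noteq> 0} \<le> m - 1"
      using card_pos less.prems(3) by auto
    have window: "\<forall>j\<in>{Suc a..<Suc a + (m - 1)}. (\<Sum>i<s. u i * dilate (c ^ j) (f i)) = 0"
    proof
      fix j assume j: "j \<in> {Suc a..<Suc a + (m - 1)}"
      obtain j' where j': "j = Suc j'" "j' \<in> {a..<a + m}" "j \<in> {a..<a + m}"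
        using j by (cases j) auto
      have "(\<Sum>i<s. u i * dilate (c ^ j) (f i)) =
          v k * dilate c (\<Sum>i<s. v i * dilate (c ^ j') (f i)) -
          dilate c (v k) * (\<Sum>i<s. v i * dilate (c ^ j) (f i))"
        by (simp add: u_def j'(1) dilate_sum dilate_dilate sum_distrib_left sum_subtractf
            algebra_simps)
      moreover have "(\<Sum>i<s. v i * dilate (c ^ j') (f i)) = 0" "(\<Sum>i<s. v i * dilate (c ^ j) (f i)) = 0"
        using less.prems(4) j'(2,3) by blast+
      ultimately show "(\<Sum>i<s. u i * dilate (c ^ j) (f i)) = 0" by simp
    qed
    show ?thesis by (rule less.hyps[OF card_u(1) k' card_u(2) window])
  qed
qed

lemma proportional_relation_undilate:
  fixes c :: "'a::idom" and f w :: "nat \<Rightarrow> 'a poly"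
  assumes "c \<noteq> 0" "k < s" "w k \<noteq> 0"
    and proportional: "\<forall>i<s. w k * dilate c (w i) = dilate c (w k) * w i"
    and rel: "(\<Sum>i<s. w i * dilate (c ^ b) (f i)) = 0"
  shows "(\<Sum>i<s. w i * f i) = 0"
proof -
  have "w k * dilate (c ^ b) (\<Sum>i<s. w i * f i) =
      dilate (c ^ b) (w k) * (\<Sum>i<s. w i * dilate (c ^ b) (f i))"
    unfolding dilate_sum sum_distrib_left
  proof (rule sum.cong)
    fix i assume "i \<in> {..<s}"
    then have "w k * dilate (c ^ b) (w i) = dilate (c ^ b) (w k) * w i"
      using dilate_power_proportional[OF assms(1,3)] proportional by simp
    then show "w k * dilate (c ^ b) (w i * f i) = dilate (c ^ b) (w k) * (w i * dilate (c ^ b) (f i))"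
      by (simp only: dilate_mult mult.assoc[symmetric])
  qed simp
  then show ?thesis using assms(1,3) rel by simp
qed

lemma fixed_relation_of_proportional_relation:
  fixes c :: "'a::idom" and f w :: "nat \<Rightarrow> 'a poly"
  assumes "c ^ n = 1" "0 < n" "k < s" "w k \<noteq> 0"
    and proportional: "\<forall>i<s. w k * dilate c (w i) = dilate c (w k) * w i"
    and rel: "(\<Sum>i<s. w i * f i) = 0"
  shows "\<exists>u. (\<forall>i<s. dilate c (u i) = u i) \<and> u k \<noteq> 0 \<and> (\<Sum>i<s. u i * f i) = 0"
proof -
  have "c \<noteq> 0" using assms(1,2) by (metis power_0_left less_irrefl zero_neq_one)
  \<comment> \<open>\<open>w k * R\<close> is the norm of \<open>w k\<close>; it is fixed since \<open>dilate c\<close> permutes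
    its factors cyclically.\<close>
  define g where "g j = dilate (c ^ j) (w k)" for j
  define R where "R = (\<Prod>j<n - 1. g (Suc j))"
  have norm: "(\<Prod>j<n. g j) = w k * R"
    using assms(2) prod.lessThan_Suc_shift[of g "n - 1"] by (simp add: R_def g_def)
  have "dilate c (\<Prod>j<n. g j) * g 0 = (\<Prod>j<n. g (Suc j)) * g 0"
    by (simp add: dilate_prod g_def dilate_dilate)
  also have "\<dots> = (\<Prod>j<Suc n. g j)"
    by (subst prod.lessThan_Suc_shift) (simp add: mult.commute)
  also have "\<dots> = (\<Prod>j<n. g j) * g n" by simp
  finally have fixed_norm: "dilate c (w k * R) = w k * R"
    using assms(1,4) norm by (simp add: g_def)
  define u where "u i = w i * R" for i
  have "w k * dilate c (u i) = w k * u i" if "i < s" for i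
  proof -
    have "w k * dilate c (u i) = (w k * dilate c (w i)) * dilate c R"
      by (simp add: u_def mult.assoc)
    also have "\<dots> = (dilate c (w k) * w i) * dilate c R"
      using proportional that by simp
    also have "\<dots> = w i * dilate c (w k * R)" by (simp add: mult_ac)
    also have "\<dots> = w k * u i" by (simp only: fixed_norm) (simp add: u_def mult_ac)
    finally show ?thesis .
  qed
  moreover have "u k \<noteq> 0"
    using norm \<open>c \<noteq> 0\<close> assms(4) by (simp add: u_def g_def flip: norm)
  moreover have "(\<Sum>i<s. u i * f i) = 0"
    using rel by (simp add: u_def mult_ac flip: sum_distrib_left)
  ultimately show ?thesis using assms(4) by auto
qed

lemma det_dilation_matrix_eq_0_iff_row_relation:
  fixes c :: "'a::idom" and f :: "nat \<Rightarrow> 'a poly"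
  shows "det (mat s s (\<lambda>(j, i). dilate (c ^ j) (f i))) = 0 \<longleftrightarrow>
    (\<exists>u. (\<exists>i<s. u i \<noteq> 0) \<and> (\<forall>j<s. (\<Sum>i<s. u i * dilate (c ^ j) (f i)) = 0))"
    (is "det ?P = 0 \<longleftrightarrow> _")
proof -
  have row: "(?P *\<^sub>v v) $ j = (\<Sum>i<s. v $ i * dilate (c ^ j) (f i))"
    if "v \<in> carrier_vec s" "j < s" for v j
    using that by (simp add: scalar_prod_def lessThan_atLeast0 mult.commute)
  have "det ?P = 0 \<longleftrightarrow> (\<exists>v. v \<in> carrier_vec s \<and> v \<noteq> 0\<^sub>v s \<and> ?P *\<^sub>v v = 0\<^sub>v s)"
    by (rule det_0_iff_vec_prod_zero) simp
  also have "\<dots> \<longleftrightarrow> (\<exists>u. (\<exists>i<s. u i \<noteq> 0) \<and> (\<forall>j<s. (\<Sum>i<s. u i * dilate (c ^ j) (f i)) = 0))"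
  proof
    assume "\<exists>v. v \<in> carrier_vec s \<and> v \<noteq> 0\<^sub>v s \<and> ?P *\<^sub>v v = 0\<^sub>v s"
    then obtain v where v: "v \<in> carrier_vec s" "v \<noteq> 0\<^sub>v s" "?P *\<^sub>v v = 0\<^sub>v s" by blast
    then show "\<exists>u. (\<exists>i<s. u i \<noteq> 0) \<and> (\<forall>j<s. (\<Sum>i<s. u i * dilate (c ^ j) (f i)) = 0)"
      using row[OF v(1)] by (intro exI[of _ "\<lambda>i. v $ i"]) (auto simp: vec_eq_iff)
  next
    assume "\<exists>u. (\<exists>i<s. u i \<noteq> 0) \<and> (\<forall>j<s. (\<Sum>i<s. u i * dilate (c ^ j) (f i)) = 0)"
    then obtain u where "\<exists>i<s. u i \<noteq> 0" "\<forall>j<s. (\<Sum>i<s. u i * dilate (c ^ j) (f i)) = 0" by blast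
    then show "\<exists>v. v \<in> carrier_vec s \<and> v \<noteq> 0\<^sub>v s \<and> ?P *\<^sub>v v = 0\<^sub>v s"
      using row[of "vec s u"] by (intro exI[of _ "vec s u"]) (auto simp: vec_eq_iff)
  qed
  finally show ?thesis .
qed

lemma det_dilation_matrix_eq_0_iff:
  fixes c :: "'a::idom" and f :: "nat \<Rightarrow> 'a poly"
  assumes "c ^ n = 1" "0 < n"
  shows "det (mat s s (\<lambda>(j, i). dilate (c ^ j) (f i))) = 0 \<longleftrightarrow>
    (\<exists>u. (\<forall>i<s. dilate c (u i) = u i) \<and> (\<exists>i<s. u i \<noteq> 0) \<and> (\<Sum>i<s. u i * f i) = 0)"
  unfolding det_dilation_matrix_eq_0_iff_row_relation
proof
  assume "\<exists>u. (\<exists>i<s. u i \<noteq> 0) \<and> (\<forall>j<s. (\<Sum>i<s. u i * dilate (c ^ j) (f i)) = 0)"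
  then obtain v k where v: "k < s" "v k \<noteq> 0"
    "\<forall>j\<in>{0..<0 + s}. (\<Sum>i<s. v i * dilate (c ^ j) (f i)) = 0"
    by auto
  have "card {i. i < s \<and> v i \<noteq> 0} \<le> s"
    by (rule order.trans[OF card_mono[of "{..<s}"]]) auto
  then obtain w k b where w: "k < s" "w k \<noteq> 0"
    "\<forall>i<s. w k * dilate c (w i) = dilate c (w k) * w i" "(\<Sum>i<s. w i * dilate (c ^ b) (f i)) = 0"
    using exists_proportional_relation[OF v(1,2) _ v(3)] by blast
  have "c \<noteq> 0" using assms by (metis power_0_left less_irrefl zero_neq_one)
  then have "(\<Sum>i<s. w i * f i) = 0"
    by (rule proportional_relation_undilate[OF _ w])
  with w(1-3) show "\<exists>u. (\<forall>i<s. dilate c (u i) = u i) \<and> (\<exists>i<s. u i \<noteq> 0) \<and> (\<Sum>i<s. u i * f i) = 0"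
    using fixed_relation_of_proportional_relation[OF assms] by blast
next
  assume "\<exists>u. (\<forall>i<s. dilate c (u i) = u i) \<and> (\<exists>i<s. u i \<noteq> 0) \<and> (\<Sum>i<s. u i * f i) = 0"
  then obtain u where u: "\<forall>i<s. dilate c (u i) = u i" "\<exists>i<s. u i \<noteq> 0" "(\<Sum>i<s. u i * f i) = 0"
    by blast
  have "(\<Sum>i<s. u i * dilate (c ^ j) (f i)) = dilate (c ^ j) (\<Sum>i<s. u i * f i)" for j
    using u(1) by (simp add: dilate_sum dilate_power_fixed)
  then show "\<exists>u. (\<exists>i<s. u i \<noteq> 0) \<and> (\<forall>j<s. (\<Sum>i<s. u i * dilate (c ^ j) (f i)) = 0)"
    using u(2,3) by auto
qed

section \<open>Finite fields and the subfield \<open>F\<^sub>q(x\<^sup>q\<^sup>-\<^sup>1)\<close>\<close>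

lemma card_UNIV_minus_one_pos: "0 < card (UNIV :: 'a::{finite,field} set) - 1"
proof -
  have "card {0::'a, 1} \<le> card (UNIV :: 'a set)" by (rule card_mono) auto
  then show ?thesis by simp
qed

lemma nonzero_power_card_UNIV_minus_one:
  fixes x :: "'a::{finite,field}"
  assumes "x \<noteq> 0"
  shows "x ^ (card (UNIV :: 'a set) - 1) = 1"
proof -
  let ?U = "UNIV - {0::'a}"
  have "(\<Prod>y\<in>?U. x * y) = \<Prod>?U"
    by (rule prod.reindex_bij_witness[of _ "\<lambda>y. y / x" "\<lambda>y. x * y"]) (use assms in auto)
  moreover have "(\<Prod>y\<in>?U. x * y) = x ^ card ?U * \<Prod>?U" by (simp add: prod.distrib)
  ultimately have "x ^ card ?U = 1" by simp
  then show ?thesis by (simp add: card_Diff_singleton)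
qed

lemma generator_power_eq_1_imp_card_le:
  fixes \<gamma> :: "'a::{finite,field}"
  assumes gen: "\<forall>y. y \<noteq> 0 \<longrightarrow> (\<exists>n. y = \<gamma> ^ n)" and "\<gamma> ^ r = 1" "0 < r"
  shows "card (UNIV :: 'a set) - 1 \<le> r"
proof -
  have "UNIV - {0} \<subseteq> (\<lambda>n. \<gamma> ^ n) ` {..<r}"
  proof
    fix y :: 'a
    assume "y \<in> UNIV - {0}"
    then obtain n where "y = \<gamma> ^ n" using gen by auto
    also have "\<dots> = (\<gamma> ^ r) ^ (n div r) * \<gamma> ^ (n mod r)"
      by (simp flip: power_mult power_add)
    also have "\<dots> = \<gamma> ^ (n mod r)" using assms(2) by simp
    finally show "y \<in> (\<lambda>n. \<gamma> ^ n) ` {..<r}" using \<open>0 < r\<close> by simp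
  qed
  then have "card (UNIV - {0::'a}) \<le> card ((\<lambda>n. \<gamma> ^ n) ` {..<r})"
    by (intro card_mono) auto
  also have "\<dots> \<le> r" using card_image_le[of "{..<r}"] by simp
  finally show ?thesis by (simp add: card_Diff_singleton)
qed

lemma generator_power_eq_1_iff:
  fixes \<gamma> :: "'a::{finite,field}"
  assumes "\<gamma> \<noteq> 0" "\<forall>y. y \<noteq> 0 \<longrightarrow> (\<exists>n. y = \<gamma> ^ n)"
  shows "\<gamma> ^ k = 1 \<longleftrightarrow> (card (UNIV :: 'a set) - 1) dvd k"
proof -
  let ?N = "card (UNIV :: 'a set) - 1"
  have "\<gamma> ^ k = (\<gamma> ^ ?N) ^ (k div ?N) * \<gamma> ^ (k mod ?N)"
    by (simp flip: power_mult power_add)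
  then have "\<gamma> ^ k = \<gamma> ^ (k mod ?N)"
    using nonzero_power_card_UNIV_minus_one[OF assms(1)] by simp
  moreover have "\<not> ?N \<le> k mod ?N"
    using card_UNIV_minus_one_pos[where 'a='a] by (simp add: not_le)
  ultimately show ?thesis
    using generator_power_eq_1_imp_card_le[OF assms(2), of "k mod ?N"]
    by (auto simp: dvd_eq_mod_eq_0)
qed

lemma generator_dilate_eq_self_iff:
  fixes \<gamma> :: "'a::{finite,field}"
  assumes "\<gamma> \<noteq> 0" "\<forall>y. y \<noteq> 0 \<longrightarrow> (\<exists>n. y = \<gamma> ^ n)"
  shows "dilate \<gamma> p = p \<longleftrightarrow> (\<exists>a. p = a \<circ>\<^sub>p monom 1 (card (UNIV :: 'a set) - 1))"
proof
  assume "dilate \<gamma> p = p"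
  then have "\<forall>k. coeff p k \<noteq> 0 \<longrightarrow> (card (UNIV :: 'a set) - 1) dvd k"
    by (simp add: dilate_eq_self_iff generator_power_eq_1_iff[OF assms])
  then show "\<exists>a. p = a \<circ>\<^sub>p monom 1 (card (UNIV :: 'a set) - 1)"
    by (blast intro: pcompose_monom_if_coeffs_dvd[OF card_UNIV_minus_one_pos])
next
  assume "\<exists>a. p = a \<circ>\<^sub>p monom 1 (card (UNIV :: 'a set) - 1)"
  then obtain a where "p = a \<circ>\<^sub>p monom 1 (card (UNIV :: 'a set) - 1)" ..
  then show "dilate \<gamma> p = p"
    by (simp only: dilate_pcompose_monom[OF nonzero_power_card_UNIV_minus_one[OF assms(1)]])
qed

lemma dependent_over_x_pow_iff_fixed_relation:
  fixes \<gamma> :: "'a::{finite,field}" and f :: "nat \<Rightarrow> 'a poly"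
  assumes gen: "\<gamma> \<noteq> 0" "\<forall>y. y \<noteq> 0 \<longrightarrow> (\<exists>n. y = \<gamma> ^ n)"
  shows "dependent_over_x_pow (card (UNIV :: 'a set) - 1) s f \<longleftrightarrow>
    (\<exists>u. (\<forall>i<s. dilate \<gamma> (u i) = u i) \<and> (\<exists>i<s. u i \<noteq> 0) \<and> (\<Sum>i<s. u i * f i) = 0)"
proof
  assume "dependent_over_x_pow (card (UNIV :: 'a set) - 1) s f"
  then obtain a i0 where "i0 < s" "a i0 \<noteq> 0"
    "(\<Sum>i<s. (a i \<circ>\<^sub>p monom 1 (card (UNIV :: 'a set) - 1)) * f i) = 0"
    unfolding dependent_over_x_pow_def by blast
  moreover have "a i0 \<circ>\<^sub>p monom 1 (card (UNIV :: 'a set) - 1) \<noteq> 0"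
    using \<open>a i0 \<noteq> 0\<close> pcompose_monom_eq_0_iff[OF card_UNIV_minus_one_pos[where 'a='a]] by blast
  ultimately show "\<exists>u. (\<forall>i<s. dilate \<gamma> (u i) = u i) \<and> (\<exists>i<s. u i \<noteq> 0) \<and> (\<Sum>i<s. u i * f i) = 0"
    using generator_dilate_eq_self_iff[OF gen]
    by (intro exI[of _ "\<lambda>i. a i \<circ>\<^sub>p monom 1 (card (UNIV :: 'a set) - 1)"]) blast
next
  assume "\<exists>u. (\<forall>i<s. dilate \<gamma> (u i) = u i) \<and> (\<exists>i<s. u i \<noteq> 0) \<and> (\<Sum>i<s. u i * f i) = 0"
  then obtain u i0 where u: "\<forall>i<s. dilate \<gamma> (u i) = u i" "i0 < s" "u i0 \<noteq> 0" "(\<Sum>i<s. u i * f i) = 0"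
    by blast
  then have "\<forall>i\<in>{..<s}. \<exists>a. u i = a \<circ>\<^sub>p monom 1 (card (UNIV :: 'a set) - 1)"
    using generator_dilate_eq_self_iff[OF gen] by blast
  then obtain a where a: "\<forall>i\<in>{..<s}. u i = a i \<circ>\<^sub>p monom 1 (card (UNIV :: 'a set) - 1)"
    by (rule bchoice[elim_format]) blast
  then have "(\<Sum>i<s. (a i \<circ>\<^sub>p monom 1 (card (UNIV :: 'a set) - 1)) * f i) = 0"
    using u(4) by (simp add: atLeast0LessThan)
  moreover have "a i0 \<noteq> 0" using a u(2,3) by auto
  ultimately show "dependent_over_x_pow (card (UNIV :: 'a set) - 1) s f"
    unfolding dependent_over_x_pow_def using u(2) by blast
qed

lemma subfield_xq1_elem_nonzero_denom:
  fixes u :: "'a::{finite,field} poly fract"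
  assumes "u \<in> subfield_xq1"
  obtains a b where "b \<noteq> 0"
    "u = to_fract (a \<circ>\<^sub>p monom 1 (card (UNIV :: 'a set) - 1)) /
         to_fract (b \<circ>\<^sub>p monom 1 (card (UNIV :: 'a set) - 1))"
proof -
  let ?M = "monom 1 (card (UNIV :: 'a set) - 1)"
  from assms obtain a b where u: "u = to_fract (a \<circ>\<^sub>p ?M) / to_fract (b \<circ>\<^sub>p ?M)"
    unfolding subfield_xq1_def by blast
  show ?thesis
  proof (cases "b = 0")
    case True
    then have "u = to_fract (0 \<circ>\<^sub>p ?M) / to_fract (1 \<circ>\<^sub>p ?M)" by (simp add: u)
    then show ?thesis by (rule that[rotated]) simp
  qed (use u that in blast)
qed

lemma dependent_over_x_pow_of_subfield_xq1_relation:
  fixes f :: "nat \<Rightarrow> 'a::{finite,field} poly"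
  assumes cK: "\<forall>i<s. c i \<in> subfield_xq1" and rel: "(\<Sum>i<s. c i * to_fract (f i)) = 0"
    and "k < s" "c k \<noteq> 0"
  shows "dependent_over_x_pow (card (UNIV :: 'a set) - 1) s f"
proof -
  define N where "N = card (UNIV :: 'a set) - 1"
  note M_eq_0_iff = pcompose_monom_eq_0_iff[OF card_UNIV_minus_one_pos[where 'a='a], folded N_def]
  have "\<forall>i\<in>{..<s}. \<exists>ab. snd ab \<noteq> 0 \<and>
      c i = to_fract (fst ab \<circ>\<^sub>p monom 1 N) / to_fract (snd ab \<circ>\<^sub>p monom 1 N)"
  proof
    fix i assume "i \<in> {..<s}"
    then have "c i \<in> subfield_xq1" using cK by simp
    then show "\<exists>ab. snd ab \<noteq> 0 \<and>
        c i = to_fract (fst ab \<circ>\<^sub>p monom 1 N) / to_fract (snd ab \<circ>\<^sub>p monom 1 N)"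
      by (rule subfield_xq1_elem_nonzero_denom[where 'a='a, folded N_def]) auto
  qed
  from bchoice[OF this] obtain ab where ab: "\<forall>i\<in>{..<s}. snd (ab i) \<noteq> 0 \<and>
      c i = to_fract (fst (ab i) \<circ>\<^sub>p monom 1 N) / to_fract (snd (ab i) \<circ>\<^sub>p monom 1 N)"
    by blast
  define D where "D = (\<Prod>l<s. snd (ab l))"
  define w where "w i = fst (ab i) * (\<Prod>l\<in>{..<s} - {i}. snd (ab l))" for i
  have D: "to_fract (D \<circ>\<^sub>p monom 1 N) \<noteq> 0"
    using ab by (simp add: D_def M_eq_0_iff)
  have w: "to_fract (w i \<circ>\<^sub>p monom 1 N) = c i * to_fract (D \<circ>\<^sub>p monom 1 N)" if "i < s" for i
  proof -
    have "D = snd (ab i) * (\<Prod>l\<in>{..<s} - {i}. snd (ab l))"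
      unfolding D_def using that by (simp add: prod.remove)
    then show ?thesis using ab that by (simp add: w_def pcompose_mult M_eq_0_iff)
  qed
  have "to_fract (\<Sum>i<s. (w i \<circ>\<^sub>p monom 1 N) * f i) =
      to_fract (D \<circ>\<^sub>p monom 1 N) * (\<Sum>i<s. c i * to_fract (f i))"
    by (simp add: w sum_distrib_left mult_ac)
  then have "(\<Sum>i<s. (w i \<circ>\<^sub>p monom 1 N) * f i) = 0"
    using rel by (simp only: mult_zero_right to_fract_eq_0_iff)
  moreover have "w k \<noteq> 0" using w[OF \<open>k < s\<close>] D \<open>c k \<noteq> 0\<close> by auto
  ultimately show ?thesis
    unfolding dependent_over_x_pow_def N_def[symmetric] using \<open>k < s\<close> by blast
qed

lemma lin_indep_over_subfield_xq1_iff: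
  fixes f :: "nat \<Rightarrow> 'a::{finite,field} poly"
  shows "lin_indep_over subfield_xq1 s (\<lambda>i. to_fract (f i)) \<longleftrightarrow>
    \<not> dependent_over_x_pow (card (UNIV :: 'a set) - 1) s f"
proof
  assume indep: "lin_indep_over subfield_xq1 s (\<lambda>i. to_fract (f i))"
  show "\<not> dependent_over_x_pow (card (UNIV :: 'a set) - 1) s f"
  proof
    assume "dependent_over_x_pow (card (UNIV :: 'a set) - 1) s f"
    then obtain a i0 where i0: "i0 < s" "a i0 \<noteq> 0"
      and rel: "(\<Sum>i<s. (a i \<circ>\<^sub>p monom 1 (card (UNIV :: 'a set) - 1)) * f i) = 0"
      unfolding dependent_over_x_pow_def by blast
    define c where "c i = to_fract (a i \<circ>\<^sub>p monom 1 (card (UNIV :: 'a set) - 1))" for i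
    have "c i \<in> subfield_xq1" for i
      unfolding subfield_xq1_def c_def
      by (intro CollectI exI[of _ "a i"] exI[of _ 1]) (simp add: pcompose_1)
    moreover have "(\<Sum>i<s. c i * to_fract (f i)) = 0"
      using rel by (simp add: c_def flip: to_fract_mult to_fract_sum)
    ultimately have "c i0 = 0" using indep i0 unfolding lin_indep_over_def by blast
    then show False
      using i0 pcompose_monom_eq_0_iff[OF card_UNIV_minus_one_pos[where 'a='a], of "a i0"] by (simp add: c_def)
  qed
qed (use dependent_over_x_pow_of_subfield_xq1_relation in \<open>auto simp: lin_indep_over_def\<close>)

theorem propositionE7:
  fixes \<gamma> :: "'a::{finite,field}" and s d :: nat and f :: "nat \<Rightarrow> 'a poly"
  assumes gen: "\<gamma> \<noteq> 0" "\<forall>y::'a. y \<noteq> 0 \<longrightarrow> (\<exists>n::nat. y = \<gamma> ^ n)"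
    and deg: "\<forall>i<s. degree (f i) \<le> d"
  shows "(det (Mmat \<gamma> s f) \<noteq> 0 \<longleftrightarrow> lin_indep_over subfield_xq1 s (\<lambda>i. to_fract (f i)))
       \<and> (card (UNIV :: 'a set) - 1 > d \<longrightarrow> (det (Mmat \<gamma> s f) \<noteq> 0 \<longleftrightarrow> lin_indep_Fq s f))"
proof -
  let ?N = "card (UNIV :: 'a set) - 1"
  let ?P = "mat s s (\<lambda>(j, i). dilate (\<gamma> ^ j) (f i))"
  interpret to_fract: inj_comm_ring_hom "to_fract :: 'a poly \<Rightarrow> 'a poly fract"
    by unfold_locales auto
  have "Mmat \<gamma> s f = map_mat to_fract ?P"
    by (rule eq_matI) (auto simp: Mmat_def dilate_def)
  then have "det (Mmat \<gamma> s f) = to_fract (det ?P)"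
    by (simp add: to_fract.hom_det)
  moreover have "det ?P = 0 \<longleftrightarrow> dependent_over_x_pow ?N s f"
    unfolding dependent_over_x_pow_iff_fixed_relation[OF gen]
    by (rule det_dilation_matrix_eq_0_iff[OF nonzero_power_card_UNIV_minus_one[OF gen(1)]
          card_UNIV_minus_one_pos])
  ultimately have det_iff: "det (Mmat \<gamma> s f) \<noteq> 0 \<longleftrightarrow> \<not> dependent_over_x_pow ?N s f"
    by simp
  have "d < ?N \<Longrightarrow> dependent_over_x_pow ?N s f \<longleftrightarrow> \<not> lin_indep_Fq s f"
    using deg by (intro dependent_over_x_pow_iff_not_lin_indep_Fq) (auto intro: le_less_trans)
  then show ?thesis
    using det_iff lin_indep_over_subfield_xq1_iff[of s f] by blast
qed

end
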